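(* Let $n\ge2$, let $A\in\mathbb{R}^{n\times n}$ be symmetric with zero diagonal, $\theta\in\mathbb{R}^n$, $\lambda>0$, and $p_1,\dots,p_n\in[0,1)$ with $p_{\max}=\max_ip_i$. Then for every fixed $w\in\mathbb{R}^{2n+1}$, $\mathbb{E}_{X\sim\mathcal{D}_{\mathsf{miss}}}[\underline G(w;X)]=\nabla\widetilde{\underline S}(w)$, and for all $X\in\{-1,0,1\}^n$ and $w\in\Delta(\lambda,2n+1)$, $\|\underline G(w;X)\|_\infty\le\frac{1}{(1-p_{\max})^2}\exp\big(\frac{\lambda}{1-p_{\max}}\big)$.
   Context: Ising model $\mathcal{D}(A,\theta)$ on $\{-1,1\}^n$: $\Pr[Z=z]\propto\exp\big(\sum_{i<j}A_{ij}z_iz_j+\sum_i\theta_iz_i\big)$. Missing-data distribution $\mathcal{D}_{\mathsf{miss}}$: draw $Z\sim\mathcal{D}(A,\theta)$ and independent $C_1,\dots,C_n\in\{0,1\}$ with $\Pr[C_i=1]=1-p_i$; output $X$ with $X_i=C_iZ_i$. $\Delta(W,k)=\{x\in\mathbb{R}^k:x\ge0,\sum_ix_i=W\}$. For $w\in\mathbb{R}^{2n+1}$ put $v_j=w_j-w_{n+j}$ for $j\in[n]$ and $\widetilde{\underline S}(w)=\mathbb{E}_{Z\sim\mathcal{D}(A,\theta)}\big[\exp\big(-\sum_{j=1}^{n-1}v_jZ_nZ_j-v_nZ_n\big)\big]$. Estimator: for $X\in\{-1,0,1\}^n$ and $i\in[n-1]$, $$\underline g^i(w;X)=-\frac{\exp(-v_nX_n)X_n}{1-p_n}\cdot\frac{\exp(-v_iX_nX_i)X_i}{1-p_i}\cdot\prod_{j\in[n-1],j\ne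 i}\frac{\exp(-v_jX_nX_j)-p_j}{1-p_j},\qquad \underline g^n(w;X)=-\frac{\exp(-v_nX_n)X_n}{1-p_n}\prod_{j\in[n-1]}\frac{\exp(-v_jX_nX_j)-p_j}{1-p_j},$$ and $\underline G(w;X)=\sum_{i=1}^{n}\underline g^i(w;X)(e^i-e^{n+i})\in\mathbb{R}^{2n+1}$, with $e^i$ the standard basis vectors of $\mathbb{R}^{2n+1}$. *)

theory Defs
  imports Complex_Main "HOL-Library.FuncSet"
begin

text \<open>Indices are 1-based as in the paper: spins/coordinates live on {1..n},
  the parameter vector w on {1..2n+1}. Vectors are functions nat => real.\<close>

definition spins :: "nat \<Rightarrow> (nat \<Rightarrow> real) set" where
  "spins n = PiE {1..n} (\<lambda>_. {-1, 1})"

definition masks :: "nat \<Rightarrow> (nat \<Rightarrow> real) set" where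
  "masks n = PiE {1..n} (\<lambda>_. {0, 1})"

definition obs_set :: "nat \<Rightarrow> (nat \<Rightarrow> real) set" where
  "obs_set n = PiE {1..n} (\<lambda>_. {-1, 0, 1})"

definition ising_weight :: "nat \<Rightarrow> (nat \<Rightarrow> nat \<Rightarrow> real) \<Rightarrow> (nat \<Rightarrow> real) \<Rightarrow> (nat \<Rightarrow> real) \<Rightarrow> real" where
  "ising_weight n A \<theta> z =
     exp ((\<Sum>i\<in>{1..n}. \<Sum>j\<in>{i<..n}. A i j * z i * z j) + (\<Sum>i\<in>{1..n}. \<theta> i * z i))"

definition ising_expect :: "nat \<Rightarrow> (nat \<Rightarrow> nat \<Rightarrow> real) \<Rightarrow> (nat \<Rightarrow> real) \<Rightarrow> ((nat \<Rightarrow> real) \<Rightarrow> real) \<Rightarrow> real" where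
  "ising_expect n A \<theta> f =
     (\<Sum>z\<in>spins n. ising_weight n A \<theta> z * f z) / (\<Sum>z\<in>spins n. ising_weight n A \<theta> z)"

text \<open>Expectation under D_miss: Z ~ D(A,theta), independent C_i with Pr[C_i=1] = 1 - p_i,
  X_i = C_i Z_i.\<close>
definition miss_expect :: "nat \<Rightarrow> (nat \<Rightarrow> nat \<Rightarrow> real) \<Rightarrow> (nat \<Rightarrow> real) \<Rightarrow> (nat \<Rightarrow> real)
      \<Rightarrow> ((nat \<Rightarrow> real) \<Rightarrow> real) \<Rightarrow> real" where
  "miss_expect n A \<theta> p f =
     ising_expect n A \<theta> (\<lambda>z. \<Sum>c\<in>masks n.
        (\<Prod>i\<in>{1..n}. if c i = 1 then 1 - p i else p i) *
        f (\<lambda>i. if i \<in> {1..n} then c i * z i else 0))"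

definition vv :: "nat \<Rightarrow> (nat \<Rightarrow> real) \<Rightarrow> nat \<Rightarrow> real" where
  "vv n w j = w j - w (n + j)"

definition S_tilde :: "nat \<Rightarrow> (nat \<Rightarrow> nat \<Rightarrow> real) \<Rightarrow> (nat \<Rightarrow> real) \<Rightarrow> (nat \<Rightarrow> real) \<Rightarrow> real" where
  "S_tilde n A \<theta> w = ising_expect n A \<theta>
     (\<lambda>z. exp (- (\<Sum>j\<in>{1..n-1}. vv n w j * z n * z j) - vv n w n * z n))"

definition g_under :: "nat \<Rightarrow> (nat \<Rightarrow> real) \<Rightarrow> (nat \<Rightarrow> real) \<Rightarrow> (nat \<Rightarrow> real) \<Rightarrow> nat \<Rightarrow> real" where
  "g_under n p w X i =
     (if i = n then
        - (exp (- vv n w n * X n) * X n / (1 - p n)) *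
          (\<Prod>j\<in>{1..n-1}. (exp (- vv n w j * X n * X j) - p j) / (1 - p j))
      else
        - (exp (- vv n w n * X n) * X n / (1 - p n)) *
          (exp (- vv n w i * X n * X i) * X i / (1 - p i)) *
          (\<Prod>j\<in>{1..n-1} - {i}. (exp (- vv n w j * X n * X j) - p j) / (1 - p j)))"

definition G_under :: "nat \<Rightarrow> (nat \<Rightarrow> real) \<Rightarrow> (nat \<Rightarrow> real) \<Rightarrow> (nat \<Rightarrow> real) \<Rightarrow> nat \<Rightarrow> real" where
  "G_under n p w X k =
     (\<Sum>i\<in>{1..n}. g_under n p w X i *
        ((if k = i then 1 else 0) - (if k = n + i then 1 else 0)))"

definition linf_norm :: "nat \<Rightarrow> (nat \<Rightarrow> real) \<Rightarrow> real" where
  "linf_norm m x = Max ((\<lambda>k. \<bar>x k\<bar>) ` {1..m})"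

definition simplex :: "real \<Rightarrow> nat \<Rightarrow> (nat \<Rightarrow> real) set" where
  "simplex W m = {x. (\<forall>k\<in>{1..m}. x k \<ge> 0) \<and> (\<Sum>k\<in>{1..m}. x k) = W}"

definition has_gradient :: "((nat \<Rightarrow> real) \<Rightarrow> real) \<Rightarrow> (nat \<Rightarrow> real) \<Rightarrow> nat \<Rightarrow> (nat \<Rightarrow> real) \<Rightarrow> bool" where
  "has_gradient f g m w \<longleftrightarrow>
     (\<forall>k\<in>{1..m}. ((\<lambda>t. f (w(k := t))) has_real_derivative g k) (at (w k)))"

end

theory Submission
  imports Defs
begin

text \<open>
  The exponent of S_tilde is linear in w, so every partial derivative of S_tilde is the Ising
  expectation of a spin monomial times the exponential. The estimator g^i is a product of one
  factor per coordinate j, which depends on the mask only through C_j; by independence its mask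
  average is the product of the coordinatewise averages, and the debiasing gives
  E[(exp(a C) - p)/(1 - p)] = exp a and E[exp(a C) C x/(1 - p)] = x exp a, which reproduces that
  monomial. For the bound, (exp a - p)/(1 - p) = 1 + q (exp a - 1) with q = 1/(1 - p) \<ge> 1 is
  at most exp(q |a|), only the two leading factors carry an extra 1/(1 - p_max), and
  the sum of the |v_j| is at most the sum of the w_k, which is \<lambda> on the simplex.
\<close>

definition coord_diff :: "nat \<Rightarrow> nat \<Rightarrow> nat \<Rightarrow> real" where
  "coord_diff n i k = (if k = i then 1 else 0) - (if k = n + i then 1 else 0)"

text \<open>The coefficient of v_i in the exponent of S_tilde, see S_tilde_exponent_eq.\<close>
definition spin_coeff :: "nat \<Rightarrow> (nat \<Rightarrow> real) \<Rightarrow> nat \<Rightarrow> real" where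
  "spin_coeff n z i = - (z n * (if i = n then 1 else z i))"

lemma vv_fun_upd: "vv n (w(k := t)) i = vv n w i + (t - w k) * coord_diff n i k"
  by (auto simp: vv_def coord_diff_def)

lemma S_tilde_exponent_eq:
  assumes "n \<ge> 1"
  shows "- (\<Sum>j\<in>{1..n-1}. vv n w j * z n * z j) - vv n w n * z n
           = (\<Sum>i\<in>{1..n}. spin_coeff n z i * vv n w i)"
proof -
  have "{1..n} = insert n {1..n-1}" using assms by auto
  then have "(\<Sum>i\<in>{1..n}. spin_coeff n z i * vv n w i)
      = - vv n w n * z n + (\<Sum>j\<in>{1..n-1}. spin_coeff n z j * vv n w j)"
    using assms by (simp add: spin_coeff_def)
  also have "(\<Sum>j\<in>{1..n-1}. spin_coeff n z j * vv n w j) = (\<Sum>j\<in>{1..n-1}. - (vv n w j * z n * z j))"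
    by (intro sum.cong) (auto simp: spin_coeff_def)
  finally show ?thesis by (simp add: sum_negf)
qed

lemma exp_linear_vv_has_derivative:
  "((\<lambda>t. exp (\<Sum>i\<in>I. a i * vv n (w(k := t)) i)) has_real_derivative
      exp (\<Sum>i\<in>I. a i * vv n w i) * (\<Sum>i\<in>I. a i * coord_diff n i k)) (at (w k))"
proof -
  have "(\<Sum>i\<in>I. a i * vv n (w(k := t)) i)
      = (\<Sum>i\<in>I. a i * vv n w i) + (t - w k) * (\<Sum>i\<in>I. a i * coord_diff n i k)" for t
    by (simp add: vv_fun_upd distrib_left sum.distrib sum_distrib_left mult_ac)
  then show ?thesis
    by (auto intro!: derivative_eq_intros)
qed

lemma S_tilde_has_partial_derivative:
  assumes "n \<ge> 1"
  shows "((\<lambda>t. S_tilde n A \<theta> (w(k := t))) has_real_derivative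
     ising_expect n A \<theta> (\<lambda>z. exp (\<Sum>i\<in>{1..n}. spin_coeff n z i * vv n w i) *
                           (\<Sum>i\<in>{1..n}. spin_coeff n z i * coord_diff n i k))) (at (w k))"
  unfolding S_tilde_def ising_expect_def S_tilde_exponent_eq[OF assms]
  by (intro DERIV_cdivide DERIV_sum DERIV_cmult exp_linear_vv_has_derivative)

definition g_factor ::
    "nat \<Rightarrow> (nat \<Rightarrow> real) \<Rightarrow> (nat \<Rightarrow> real) \<Rightarrow> (nat \<Rightarrow> real) \<Rightarrow> nat \<Rightarrow> nat \<Rightarrow> real" where
  "g_factor n p w X i j =
     (if j = n then - (exp (- vv n w n * X n) * X n / (1 - p n))
      else if j = i then exp (- vv n w i * X n * X i) * X i / (1 - p i)
      else (exp (- vv n w j * X n * X j) - p j) / (1 - p j))"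

lemma g_under_eq_prod:
  assumes "i \<in> {1..n}"
  shows "g_under n p w X i = (\<Prod>j\<in>{1..n}. g_factor n p w X i j)"
proof -
  have "{1..n} = insert n {1..n-1}" "n \<notin> {1..n-1}" using assms by auto
  then have split_n: "(\<Prod>j\<in>{1..n}. g_factor n p w X i j)
      = g_factor n p w X i n * (\<Prod>j\<in>{1..n-1}. g_factor n p w X i j)"
    by simp
  show ?thesis
  proof (cases "i = n")
    case True
    have "(\<Prod>j\<in>{1..n-1}. g_factor n p w X i j)
        = (\<Prod>j\<in>{1..n-1}. (exp (- vv n w j * X n * X j) - p j) / (1 - p j))"
      using True by (intro prod.cong) (auto simp: g_factor_def)
    then show ?thesis
      unfolding split_n using True by (simp add: g_under_def g_factor_def)
  next
    case False
    then have i: "i \<in> {1..n-1}" using assms by auto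
    have "(\<Prod>j\<in>{1..n-1}-{i}. g_factor n p w X i j)
        = (\<Prod>j\<in>{1..n-1}-{i}. (exp (- vv n w j * X n * X j) - p j) / (1 - p j))"
      by (intro prod.cong) (auto simp: g_factor_def)
    moreover have "(\<Prod>j\<in>{1..n-1}. g_factor n p w X i j)
        = g_factor n p w X i i * (\<Prod>j\<in>{1..n-1}-{i}. g_factor n p w X i j)"
      using i by (simp add: prod.remove)
    ultimately show ?thesis
      unfolding split_n using False by (simp add: g_under_def g_factor_def mult.assoc)
  qed
qed

abbreviation masked :: "nat \<Rightarrow> (nat \<Rightarrow> real) \<Rightarrow> (nat \<Rightarrow> real) \<Rightarrow> nat \<Rightarrow> real" where
  "masked n c z \<equiv> \<lambda>j. if j \<in> {1..n} then c j * z j else 0"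

abbreviation mask_prob :: "nat \<Rightarrow> (nat \<Rightarrow> real) \<Rightarrow> (nat \<Rightarrow> real) \<Rightarrow> real" where
  "mask_prob n p c \<equiv> \<Prod>j\<in>{1..n}. if c j = 1 then 1 - p j else p j"

text \<open>If C_n = 0 both products vanish; otherwise X_n = z_n, and factor j only reads X_n and X_j.
  This decouples the masks, as each factor then depends on a single C_j.\<close>
lemma g_factor_masked_prod:
  assumes c: "c \<in> masks n" and i: "i \<in> {1..n}"
  shows "(\<Prod>j\<in>{1..n}. g_factor n p w (masked n c z) i j)
       = (\<Prod>j\<in>{1..n}. g_factor n p w (z(j := c j * z j)) i j)"
proof -
  have n: "n \<in> {1..n}" using i by auto
  then have "c n = 0 \<or> c n = 1" using c by (auto simp: masks_def)
  then show ?thesis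
  proof
    assume "c n = 0"
    then have "g_factor n p w (masked n c z) i n = 0"
      "g_factor n p w (z(n := c n * z n)) i n = 0"
      using n by (simp_all add: g_factor_def)
    then show ?thesis
      using n by (metis (no_types, lifting) finite_atLeastAtMost prod_zero_iff)
  next
    assume "c n = 1"
    then show ?thesis
      using n by (intro prod.cong) (auto simp: g_factor_def)
  qed
qed

lemma mask_average_g_factor:
  assumes "p j \<noteq> 1"
  shows "(\<Sum>b\<in>{0,1}. (if b = 1 then 1 - p j else p j) * g_factor n p w (z(j := b * z j)) i j)
       = (if j = n then - z n else if j = i then z i else 1) * exp (spin_coeff n z j * vv n w j)"
proof -
  have "1 - p j \<noteq> 0" using assms by simp
  then show ?thesis
    by (auto simp: g_factor_def spin_coeff_def field_simps)
qed

lemma prod_spin_factors: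
  assumes "i \<in> {1..n}"
  shows "(\<Prod>j\<in>{1..n}. if j = n then - z n else if j = i then z i else (1::real)) = spin_coeff n z i"
proof (cases "i = n")
  case True
  have "(\<Prod>j\<in>{1..n}. if j = n then - z n else if j = i then z i else 1)
      = (\<Prod>j\<in>{1..n}. if j = n then - z n else 1)"
    using True by (intro prod.cong) auto
  then show ?thesis using assms True by (simp add: spin_coeff_def)
next
  case False
  have "(\<Prod>j\<in>{1..n}. if j = n then - z n else if j = i then z i else 1)
      = (\<Prod>j\<in>{1..n}. (if j = n then - z n else 1) * (if j = i then z i else 1))"
    using False by (intro prod.cong) auto
  then show ?thesis using assms False by (simp add: prod.distrib spin_coeff_def)
qed

lemma g_under_unbiased:
  assumes p: "\<forall>j\<in>{1..n}. p j \<noteq> 1" and i: "i \<in> {1..n}"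
  shows "(\<Sum>c\<in>masks n. mask_prob n p c * g_under n p w (masked n c z) i)
       = spin_coeff n z i * exp (\<Sum>j\<in>{1..n}. spin_coeff n z j * vv n w j)"
proof -
  have "(\<Sum>c\<in>masks n. mask_prob n p c * g_under n p w (masked n c z) i)
      = (\<Sum>c\<in>masks n. \<Prod>j\<in>{1..n}.
            (if c j = 1 then 1 - p j else p j) * g_factor n p w (z(j := c j * z j)) i j)"
    by (intro sum.cong refl)
      (simp only: g_under_eq_prod[OF i] g_factor_masked_prod[OF _ i] prod.distrib)
  also have "\<dots> = (\<Prod>j\<in>{1..n}. \<Sum>b\<in>{0,1}.
            (if b = 1 then 1 - p j else p j) * g_factor n p w (z(j := b * z j)) i j)"
    unfolding masks_def by (rule prod_sum_PiE[symmetric]) auto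
  also have "\<dots> = (\<Prod>j\<in>{1..n}.
            (if j = n then - z n else if j = i then z i else 1) * exp (spin_coeff n z j * vv n w j))"
    using p by (intro prod.cong refl mask_average_g_factor) auto
  also have "\<dots> = spin_coeff n z i * exp (\<Sum>j\<in>{1..n}. spin_coeff n z j * vv n w j)"
    by (simp only: prod.distrib prod_spin_factors[OF i] exp_sum[OF finite_atLeastAtMost])
  finally show ?thesis .
qed

lemma G_under_unbiased:
  assumes "\<forall>j\<in>{1..n}. p j \<noteq> 1"
  shows "(\<Sum>c\<in>masks n. mask_prob n p c * G_under n p w (masked n c z) k)
       = exp (\<Sum>i\<in>{1..n}. spin_coeff n z i * vv n w i) *
           (\<Sum>i\<in>{1..n}. spin_coeff n z i * coord_diff n i k)"
proof -
  have "(\<Sum>c\<in>masks n. mask_prob n p c * G_under n p w (masked n c z) k)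
      = (\<Sum>i\<in>{1..n}.
           (\<Sum>c\<in>masks n. mask_prob n p c * g_under n p w (masked n c z) i) * coord_diff n i k)"
    unfolding G_under_def coord_diff_def[symmetric]
    by (simp add: sum_distrib_left sum_distrib_right mult.assoc sum.swap[where A = "masks n"])
  also have "\<dots> = (\<Sum>i\<in>{1..n}.
           spin_coeff n z i * exp (\<Sum>j\<in>{1..n}. spin_coeff n z j * vv n w j) * coord_diff n i k)"
    by (intro sum.cong refl) (simp only: g_under_unbiased[OF assms])
  also have "\<dots> = exp (\<Sum>i\<in>{1..n}. spin_coeff n z i * vv n w i) *
           (\<Sum>i\<in>{1..n}. spin_coeff n z i * coord_diff n i k)"
    by (simp add: sum_distrib_right mult_ac)
  finally show ?thesis .
qed

lemma S_tilde_has_gradient: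
  assumes "n \<ge> 1" and "\<forall>j\<in>{1..n}. p j \<noteq> 1"
  shows "has_gradient (S_tilde n A \<theta>)
           (\<lambda>k. miss_expect n A \<theta> p (\<lambda>X. G_under n p w X k)) m w"
  unfolding has_gradient_def miss_expect_def G_under_unbiased[OF assms(2)]
  using S_tilde_has_partial_derivative[OF assms(1)] by blast

lemma exp_mult_ge_bernoulli:
  fixes a q :: real
  assumes "0 \<le> a" and "1 \<le> q"
  shows "1 + q * (exp a - 1) \<le> exp (q * a)"
proof -
  let ?f = "\<lambda>x. exp (q * x) - 1 - q * (exp x - 1)"
  have "?f 0 \<le> ?f a"
  proof (rule DERIV_nonneg_imp_nondecreasing[OF assms(1)])
    fix x :: real
    assume "0 \<le> x"
    then have "q * exp x \<le> q * exp (q * x)"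
      using assms(2) by (simp add: mult_le_cancel_right1)
    moreover have "DERIV ?f x :> q * exp (q * x) - q * exp x"
      by (auto intro!: derivative_eq_intros)
    ultimately show "\<exists>y. DERIV ?f x :> y \<and> 0 \<le> y" by force
  qed
  then show ?thesis by simp
qed

lemma debiased_exp_abs_le:
  fixes a b p :: real
  assumes "0 \<le> p" "p < 1" "\<bar>a\<bar> \<le> b"
  shows "\<bar>(exp a - p) / (1 - p)\<bar> \<le> exp (b / (1 - p))"
proof -
  define q where "q = 1 / (1 - p)"
  have q: "1 \<le> q" using assms by (simp add: q_def field_simps)
  have factor_eq: "(exp a - p) / (1 - p) = 1 + q * (exp a - 1)" and bound_eq: "b / (1 - p) = q * b"
    using assms by (simp_all add: q_def field_simps)
  show ?thesis
  proof (cases "0 \<le> a")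
    case True
    have "1 + q * (exp a - 1) \<le> exp (q * a)"
      using exp_mult_ge_bernoulli[OF True q] .
    also have "\<dots> \<le> exp (q * b)"
      using assms q by (intro exp_mono mult_left_mono) auto
    finally show ?thesis
      using True q unfolding factor_eq bound_eq by simp
  next
    case False
    have "- b \<le> exp a - 1"
      using assms exp_ge_add_one_self[of a] by linarith
    moreover have "exp a \<le> 1"
      using False by simp
    ultimately have "q * (- b) \<le> q * (exp a - 1)" "q * (exp a - 1) \<le> 0"
      using q by (auto intro!: mult_left_mono mult_nonneg_nonpos simp del: mult_minus_right)
    then have "1 - q * b \<le> 1 + q * (exp a - 1)" "1 + q * (exp a - 1) \<le> 1"
      by simp_all
    moreover have "1 + q * b \<le> exp (q * b)" "0 \<le> q * b"
      using q assms by (auto simp: exp_ge_add_one_self)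
    ultimately show ?thesis
      unfolding factor_eq bound_eq abs_le_iff by linarith
  qed
qed

lemma debiased_factor_abs_le:
  fixes p M v x :: real
  assumes "0 \<le> p" "p \<le> M" "M < 1" "\<bar>x\<bar> \<le> 1"
  shows "\<bar>(exp (- v * x) - p) / (1 - p)\<bar> \<le> exp (\<bar>v\<bar> / (1 - M))"
proof -
  have "\<bar>- v * x\<bar> \<le> \<bar>v\<bar>"
    using assms(4) by (simp add: abs_mult mult_left_le)
  then have "\<bar>(exp (- v * x) - p) / (1 - p)\<bar> \<le> exp (\<bar>v\<bar> / (1 - p))"
    using assms by (intro debiased_exp_abs_le) auto
  also have "\<dots> \<le> exp (\<bar>v\<bar> / (1 - M))"
    using assms by (auto intro!: divide_left_mono)
  finally show ?thesis .
qed

lemma weighted_factor_abs_le: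
  fixes p M v x y :: real
  assumes "0 \<le> p" "p \<le> M" "M < 1" "\<bar>x\<bar> \<le> 1" "\<bar>y\<bar> \<le> 1"
  shows "\<bar>exp (- v * x) * y / (1 - p)\<bar> \<le> exp (\<bar>v\<bar> / (1 - M)) / (1 - M)"
proof -
  have "\<bar>- v * x\<bar> \<le> \<bar>v\<bar>"
    using assms(4) by (simp add: abs_mult mult_left_le)
  also have "\<dots> \<le> \<bar>v\<bar> / (1 - M)"
    using assms by (simp add: le_divide_eq mult_left_le)
  finally have "\<bar>- v * x\<bar> \<le> \<bar>v\<bar> / (1 - M)" .
  then have "exp (- v * x) \<le> exp (\<bar>v\<bar> / (1 - M))"
    by simp
  moreover have "1 / (1 - p) \<le> 1 / (1 - M)"
    using assms by (intro divide_left_mono) auto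
  ultimately have
    "exp (- v * x) * \<bar>y\<bar> * (1 / (1 - p)) \<le> exp (\<bar>v\<bar> / (1 - M)) * 1 * (1 / (1 - M))"
    using assms by (intro mult_mono) auto
  then show ?thesis
    using assms by (simp add: abs_mult)
qed

lemma g_factor_abs_le:
  assumes p: "\<forall>j\<in>{1..n}. 0 \<le> p j \<and> p j \<le> M" and M: "M < 1"
    and X: "\<forall>j\<in>{1..n}. \<bar>X j\<bar> \<le> 1" and j: "j \<in> {1..n}"
  shows "\<bar>g_factor n p w X i j\<bar>
           \<le> (if j = n \<or> j = i then 1 / (1 - M) else 1) * exp (\<bar>vv n w j\<bar> / (1 - M))"
proof -
  have Xn: "\<bar>X n\<bar> \<le> 1" and Xj: "\<bar>X j\<bar> \<le> 1" and pj: "0 \<le> p j" "p j \<le> M"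
    using X p j by auto
  have Xnj: "\<bar>X n * X j\<bar> \<le> 1"
    using Xn Xj by (simp add: abs_mult mult_le_one)
  consider "j = n" | "j \<noteq> n" "j = i" | "j \<noteq> n" "j \<noteq> i" by blast
  then show ?thesis
  proof cases
    case 1
    then show ?thesis
      using weighted_factor_abs_le[OF pj M Xn Xn] by (simp add: g_factor_def)
  next
    case 2
    then show ?thesis
      using weighted_factor_abs_le[OF pj M Xnj Xj, of "vv n w j"] by (simp add: g_factor_def mult.assoc)
  next
    case 3
    then show ?thesis
      using debiased_factor_abs_le[OF pj M Xnj, of "vv n w j"] by (simp add: g_factor_def mult.assoc)
  qed
qed

lemma g_under_abs_le:
  assumes p: "\<forall>j\<in>{1..n}. 0 \<le> p j \<and> p j \<le> M" and M: "M < 1"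
    and X: "\<forall>j\<in>{1..n}. \<bar>X j\<bar> \<le> 1" and i: "i \<in> {1..n}"
  shows "\<bar>g_under n p w X i\<bar> \<le> exp ((\<Sum>j\<in>{1..n}. \<bar>vv n w j\<bar>) / (1 - M)) / (1 - M)^2"
proof -
  define r where "r = 1 / (1 - M)"
  have "0 \<le> M" using p i by force
  then have r: "1 \<le> r" using M by (simp add: r_def)
  have "card ({1..n} \<inter> {j. j = n \<or> j = i}) \<le> card {n, i}"
    by (intro card_mono) auto
  also have "\<dots> \<le> 2"
    by (simp add: card_insert_if)
  finally have card_le: "card ({1..n} \<inter> {j. j = n \<or> j = i}) \<le> 2" .
  have "\<bar>g_under n p w X i\<bar> = (\<Prod>j\<in>{1..n}. \<bar>g_factor n p w X i j\<bar>)"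
    by (simp add: g_under_eq_prod[OF i] abs_prod)
  also have "\<dots> \<le> (\<Prod>j\<in>{1..n}. (if j = n \<or> j = i then r else 1) * exp (\<bar>vv n w j\<bar> / (1 - M)))"
  proof (rule prod_mono)
    fix j assume "j \<in> {1..n}"
    then show "0 \<le> \<bar>g_factor n p w X i j\<bar> \<and>
        \<bar>g_factor n p w X i j\<bar> \<le> (if j = n \<or> j = i then r else 1) * exp (\<bar>vv n w j\<bar> / (1 - M))"
      unfolding r_def by (intro conjI abs_ge_zero g_factor_abs_le[OF p M X])
  qed
  also have "\<dots> = r ^ card ({1..n} \<inter> {j. j = n \<or> j = i}) *
      exp ((\<Sum>j\<in>{1..n}. \<bar>vv n w j\<bar>) / (1 - M))"
    by (simp add: prod.distrib prod.If_cases exp_sum sum_divide_distrib)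
  also have "\<dots> \<le> r ^ 2 * exp ((\<Sum>j\<in>{1..n}. \<bar>vv n w j\<bar>) / (1 - M))"
    using r card_le by (intro mult_right_mono power_increasing) auto
  finally show ?thesis
    by (simp add: r_def power_one_over)
qed

lemma G_under_cases:
  "G_under n p w X k = (if k \<in> {1..n} then g_under n p w X k
      else if k \<in> {n+1..2*n} then - g_under n p w X (k - n) else 0)"
proof -
  have first: "(\<Sum>i\<in>{1..n}. g_under n p w X i * (if k = i then 1 else 0))
      = (if k \<in> {1..n} then g_under n p w X k else 0)"
    by (simp add: if_distrib cong: if_cong)
  have "(\<Sum>i\<in>{1..n}. g_under n p w X i * (if k = n + i then 1 else 0))
      = (\<Sum>i\<in>{1..n}. if i = k - n \<and> n < k then g_under n p w X i else 0)"
    by (intro sum.cong) auto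
  also have "\<dots> = (if k \<in> {n+1..2*n} then g_under n p w X (k - n) else 0)"
    by (cases "n < k") auto
  finally have second: "(\<Sum>i\<in>{1..n}. g_under n p w X i * (if k = n + i then 1 else 0))
      = (if k \<in> {n+1..2*n} then g_under n p w X (k - n) else 0)" .
  show ?thesis
    unfolding G_under_def right_diff_distrib sum_subtractf first second by auto
qed

lemma G_under_abs_le:
  assumes "\<forall>j\<in>{1..n}. 0 \<le> p j \<and> p j \<le> M" and "M < 1" and "\<forall>j\<in>{1..n}. \<bar>X j\<bar> \<le> 1"
  shows "\<bar>G_under n p w X k\<bar> \<le> exp ((\<Sum>j\<in>{1..n}. \<bar>vv n w j\<bar>) / (1 - M)) / (1 - M)^2"
proof -
  have "k - n \<in> {1..n}" if "k \<in> {n+1..2*n}" using that by auto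
  then show ?thesis
    using g_under_abs_le[OF assms] by (auto simp: G_under_cases)
qed

lemma simplex_sum_abs_vv_le:
  assumes "w \<in> simplex lam (2 * n + 1)"
  shows "(\<Sum>j\<in>{1..n}. \<bar>vv n w j\<bar>) \<le> lam"
proof -
  have nonneg: "\<forall>k\<in>{1..2*n+1}. 0 \<le> w k" and total: "(\<Sum>k\<in>{1..2*n+1}. w k) = lam"
    using assms by (auto simp: simplex_def)
  have "(\<Sum>j\<in>{1..n}. \<bar>vv n w j\<bar>) \<le> (\<Sum>j\<in>{1..n}. w j + w (j + n))"
  proof (rule sum_mono)
    fix j assume "j \<in> {1..n}"
    then have "0 \<le> w j" "0 \<le> w (j + n)" using nonneg by auto
    then show "\<bar>vv n w j\<bar> \<le> w j + w (j + n)" by (simp add: vv_def add.commute)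
  qed
  also have "\<dots> = (\<Sum>j\<in>{1..n}. w j) + (\<Sum>j\<in>{1+n..n+n}. w j)"
    using sum.shift_bounds_cl_nat_ivl[of w 1 n n] by (simp add: sum.distrib)
  also have "\<dots> = (\<Sum>j\<in>{1..n+n}. w j)"
    by (subst sum.ub_add_nat) auto
  also have "\<dots> \<le> (\<Sum>j\<in>{1..2*n+1}. w j)"
    using nonneg by (intro sum_mono2) auto
  finally show ?thesis
    using total by simp
qed

lemma linf_norm_le:
  assumes "1 \<le> m" and "\<forall>k\<in>{1..m}. \<bar>x k\<bar> \<le> B"
  shows "linf_norm m x \<le> B"
  using assms by (simp add: linf_norm_def)

theorem mainTheorem10:
  fixes n :: nat and A :: "nat \<Rightarrow> nat \<Rightarrow> real" and \<theta> p :: "nat \<Rightarrow> real" and lam :: real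
  assumes "n \<ge> 2"
    and "\<forall>i\<in>{1..n}. \<forall>j\<in>{1..n}. A i j = A j i"
    and "\<forall>i\<in>{1..n}. A i i = 0"
    and "lam > 0"
    and "\<forall>i\<in>{1..n}. 0 \<le> p i \<and> p i < 1"
  shows "(\<forall>w. has_gradient (S_tilde n A \<theta>)
              (\<lambda>k. miss_expect n A \<theta> p (\<lambda>X. G_under n p w X k)) (2 * n + 1) w)
       \<and> (\<forall>X\<in>obs_set n. \<forall>w\<in>simplex lam (2 * n + 1).
            linf_norm (2 * n + 1) (G_under n p w X)
              \<le> 1 / (1 - Max (p ` {1..n}))^2 * exp (lam / (1 - Max (p ` {1..n}))))"
proof (intro conjI allI ballI)
  fix w
  show "has_gradient (S_tilde n A \<theta>) (\<lambda>k. miss_expect n A \<theta> p (\<lambda>X. G_under n p w X k)) (2 * n + 1) w"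
    using assms(1,5) by (intro S_tilde_has_gradient) auto
next
  fix X w
  assume X: "X \<in> obs_set n" and w: "w \<in> simplex lam (2 * n + 1)"
  define M where "M = Max (p ` {1..n})"
  have M: "M < 1" and p: "\<forall>j\<in>{1..n}. 0 \<le> p j \<and> p j \<le> M"
    using assms(1,5) by (auto simp: M_def)
  have "\<forall>j\<in>{1..n}. \<bar>X j\<bar> \<le> 1"
    using X by (auto simp: obs_set_def PiE_def Pi_def)
  then have "linf_norm (2 * n + 1) (G_under n p w X)
      \<le> exp ((\<Sum>j\<in>{1..n}. \<bar>vv n w j\<bar>) / (1 - M)) / (1 - M)^2"
    by (intro linf_norm_le G_under_abs_le[OF p M] ballI) auto
  also have "\<dots> \<le> 1 / (1 - M)^2 * exp (lam / (1 - M))"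
    using simplex_sum_abs_vv_le[OF w] M by (auto intro!: divide_right_mono)
  finally show "linf_norm (2 * n + 1) (G_under n p w X)
      \<le> 1 / (1 - Max (p ` {1..n}))^2 * exp (lam / (1 - Max (p ` {1..n})))"
    unfolding M_def .
qed

end
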